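(* For every $n \geq 2$, every $p=(p_1,\ldots,p_n) \in (0,1)^n$ with $p_1 + \cdots + p_n \leq 1$ and every integer $k \geq 0$, $$\Pr\{T_{2,n}(p) > k\} \geq \Pr\{T_{2,n}(v) > k\} \geq \Pr\{T_{2,n}(u) > k\},$$ where $p_0 = 1 - (p_1 + \cdots + p_n)$, $v=(v_1,\ldots,v_n)$ with $v_i = (1-p_0)/n$, and $u=(1/n,\ldots,1/n)$.
   Context: For a vector $q=(q_1,\ldots,q_n)$ of nonnegative reals with $q_1+\cdots+q_n\le 1$, let $q_0 = 1-(q_1+\cdots+q_n)$; coupons are drawn independently, one at each time $1,2,\ldots$, from $\{0,1,\ldots,n\}$, coupon $i$ with probability $q_i$, and coupon $0$ never belongs to the collection. $T_{2,n}(q)$ is the number of draws needed until 2 distinct coupons among $\{1,\ldots,n\}$ have first been drawn. Convention: $0^0=1$. *)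

theory Defs
  imports "HOL-Probability.Probability"
begin

text \<open>Coupon distribution on {0,1,...,n}: coupon i (1 \<le> i \<le> n) has probability q i,
  coupon 0 has probability q_0 = 1 - (q 1 + ... + q n). Meaningful when
  q i \<ge> 0 and the sum is \<le> 1.\<close>
definition coupon_pmf :: "nat \<Rightarrow> (nat \<Rightarrow> real) \<Rightarrow> nat pmf" where
  "coupon_pmf n q = embed_pmf (\<lambda>i. if i = 0 then 1 - (\<Sum>j=1..n. q j)
                                    else if i \<in> {1..n} then q i else 0)"

text \<open>T_{2,n} on a stream of draws (draw at time t is the (t-1)-th stream element):
  number of draws until 2 distinct coupons among {1..n} have been drawn (\<infinity> if never).\<close>
definition T2 :: "nat \<Rightarrow> nat stream \<Rightarrow> enat" where
  "T2 n \<omega> = (if \<exists>t. card (set (stake t \<omega>) \<inter> {1..n}) \<ge> 2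
             then enat (LEAST t. card (set (stake t \<omega>) \<inter> {1..n}) \<ge> 2) else \<infinity>)"

definition T2_tail :: "nat \<Rightarrow> (nat \<Rightarrow> real) \<Rightarrow> nat \<Rightarrow> real" where
  "T2_tail n q k = measure (stream_space (measure_pmf (coupon_pmf n q)))
      {\<omega> \<in> space (stream_space (measure_pmf (coupon_pmf n q))). T2 n \<omega> > enat k}"

end

theory Submission
  imports Defs
begin

(*
  The tail probability Pr{T_{2,n}(q) > k} has a closed form:
  T_{2,n}(q) > k holds iff the first k draws contain at most one distinct coupon of
  {1..n}, i.e. iff they all avoid {1..n} (probability q_0^k) or all lie in
  {0, j} for some j (probability (q_0 + q_j)^k).  These n + 1 events form a
  "sunflower" whose petals meet only in the core event, so with q_0 = 1 - sum q
    Pr{T_{2,n}(q) > k} = q_0^k + sum_j ((q_0 + q_j)^k - q_0^k).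
  For fixed q_0 the sum of the convex functions (q_0 + q_j)^k is minimised by
  equal q_j (Jensen), which gives the first inequality; the second one says that
  for equal q_j the tail decreases when the mass q_0 of coupon 0 is removed,
  an elementary estimate on b^k - c^k.
*)

lemma pmf_coupon_pmf:
  assumes nonneg: "\<forall>i\<in>{1..n}. 0 \<le> q i" and total: "(\<Sum>i=1..n. q i) \<le> 1"
  shows "pmf (coupon_pmf n q) i
       = (if i = 0 then 1 - (\<Sum>j=1..n. q j) else if i \<in> {1..n} then q i else 0)"
  unfolding coupon_pmf_def
proof (rule pmf_embed_pmf)
  let ?f = "\<lambda>i. if i = 0 then 1 - (\<Sum>j=1..n. q j) else if i \<in> {1..n} then q i else 0"
  show "0 \<le> ?f i" for i
    using nonneg total by auto
  have "(\<Sum>i\<in>{0..n}. ?f i) = ?f 0 + (\<Sum>i\<in>{1..n}. ?f i)"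
    by (simp add: sum.atLeast_Suc_atMost)
  also have "\<dots> = 1"
    by simp
  finally have "(\<Sum>i\<in>{0..n}. ?f i) = 1" .
  moreover have "(\<integral>\<^sup>+ i. ennreal (?f i) \<partial>count_space UNIV) = ennreal (\<Sum>i\<in>{0..n}. ?f i)"
    using nonneg total by (subst nn_integral_count_space'[of "{0..n}"]) (auto intro!: sum_ennreal)
  ultimately show "(\<integral>\<^sup>+ i. ennreal (?f i) \<partial>count_space UNIV) = 1"
    by simp
qed

lemma prob_coupon_avoid:
  assumes nonneg: "\<forall>i\<in>{1..n}. 0 \<le> q i" and total: "(\<Sum>i=1..n. q i) \<le> 1"
    and S: "S \<subseteq> {1..n}"
  shows "measure_pmf.prob (coupon_pmf n q) (- S) = 1 - (\<Sum>i\<in>S. q i)"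
proof -
  have "measure_pmf.prob (coupon_pmf n q) S = (\<Sum>i\<in>S. q i)"
    using S finite_subset[OF S]
    by (auto simp: measure_measure_pmf_finite pmf_coupon_pmf[OF nonneg total] intro!: sum.cong)
  then show ?thesis
    using measure_pmf.prob_compl[of S "coupon_pmf n q"] by (simp add: Compl_eq_Diff_UNIV)
qed

definition draws_within :: "nat \<Rightarrow> 'a set \<Rightarrow> 'a stream set" where
  "draws_within k A = {\<omega>. set (stake k \<omega>) \<subseteq> A}"

lemma draws_within_snth: "draws_within k A = {\<omega>. \<forall>i<k. \<omega> !! i \<in> A}"
  by (force simp: draws_within_def set_conv_nth)

lemma sets_draws_within [measurable]:
  "draws_within k A \<in> sets (stream_space (measure_pmf D))"
proof -
  have draw: "Measurable.pred (stream_space (measure_pmf D)) (\<lambda>\<omega>. \<omega> !! i \<in> A)" for i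
    using measurable_snth by (rule measurable_compose) simp
  have "Measurable.pred (stream_space (measure_pmf D)) (\<lambda>\<omega>. \<forall>i\<in>{..<k}. \<omega> !! i \<in> A)"
    using draw by (intro pred_intros_finite) auto
  then show ?thesis
    by (simp add: draws_within_snth pred_def space_stream_space Ball_def)
qed

lemma emeasure_draws_within:
  "emeasure (stream_space (measure_pmf D)) (draws_within k A) = emeasure (measure_pmf D) A ^ k"
proof (induction k)
  case 0
  interpret S: prob_space "stream_space (measure_pmf D)"
    by (rule prob_space.prob_space_stream_space[OF measure_pmf.prob_space_axioms])
  show ?case using S.emeasure_space_1 by (simp add: draws_within_def space_stream_space)
next
  case (Suc k)
  have first_draw: "{\<omega>\<in>space (stream_space (measure_pmf D)). t ## \<omega> \<in> draws_within (Suc k) A}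
      = (if t \<in> A then draws_within k A else {})" for t
    by (auto simp: draws_within_snth space_stream_space All_less_Suc2)
  have "emeasure (stream_space (measure_pmf D)) (draws_within (Suc k) A)
      = (\<integral>\<^sup>+t. indicator A t * emeasure (stream_space (measure_pmf D)) (draws_within k A) \<partial>measure_pmf D)"
    by (subst prob_space.emeasure_stream_space[OF measure_pmf.prob_space_axioms])
       (auto simp: first_draw intro!: nn_integral_cong split: split_indicator)
  also have "\<dots> = emeasure (measure_pmf D) A * emeasure (measure_pmf D) A ^ k"
    by (simp add: nn_integral_multc Suc.IH)
  finally show ?case by simp
qed

lemma measure_draws_within:
  "measure (stream_space (measure_pmf D)) (draws_within k A) = measure_pmf.prob D A ^ k"
proof -
  have "measure (stream_space (measure_pmf D)) (draws_within k A)
      = enn2real (emeasure (measure_pmf D) A ^ k)"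
    by (simp only: measure_def emeasure_draws_within)
  also have "\<dots> = enn2real (ennreal (measure_pmf.prob D A) ^ k)"
    by (simp only: measure_pmf.emeasure_eq_measure)
  also have "\<dots> = measure_pmf.prob D A ^ k"
    by (simp add: ennreal_power)
  finally show ?thesis .
qed

lemma set_stake_mono: "t \<le> t' \<Longrightarrow> set (stake t \<omega>) \<subseteq> set (stake t' \<omega>)"
  by (metis le_Suc_ex set_append stake_add Un_upper1)

lemma T2_gt_iff: "T2 n \<omega> > enat k \<longleftrightarrow> card (set (stake k \<omega>) \<inter> {1..n}) \<le> 1"
proof -
  define P where "P t \<longleftrightarrow> card (set (stake t \<omega>) \<inter> {1..n}) \<ge> 2" for t
  have P_mono: "P t'" if "P t" "t \<le> t'" for t t'
  proof -
    have "card (set (stake t \<omega>) \<inter> {1..n}) \<le> card (set (stake t' \<omega>) \<inter> {1..n})"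
      using set_stake_mono[OF \<open>t \<le> t'\<close>, of \<omega>] by (intro card_mono) auto
    with \<open>P t\<close> show ?thesis unfolding P_def by simp
  qed
  have "T2 n \<omega> \<le> enat k \<longleftrightarrow> P k"
  proof
    assume "T2 n \<omega> \<le> enat k"
    then have "\<exists>t. P t" and "(LEAST t. P t) \<le> k"
      by (auto simp: T2_def P_def split: if_splits)
    then show "P k"
      using LeastI_ex P_mono by blast
  next
    assume "P k"
    then show "T2 n \<omega> \<le> enat k"
      using Least_le[of P k] by (auto simp: T2_def P_def)
  qed
  then have "T2 n \<omega> > enat k \<longleftrightarrow> \<not> P k"
    by (simp add: not_le[symmetric])
  then show ?thesis
    unfolding P_def by linarith
qed

lemma (in finite_measure) measure_sunflower_Union:
  assumes "finite J" and "W0 \<in> sets M" and "\<And>j. j \<in> J \<Longrightarrow> W j \<in> sets M"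
    and "\<And>j. j \<in> J \<Longrightarrow> W0 \<subseteq> W j"
    and "\<And>i j. i \<in> J \<Longrightarrow> j \<in> J \<Longrightarrow> i \<noteq> j \<Longrightarrow> W i \<inter> W j \<subseteq> W0"
  shows "measure M (W0 \<union> (\<Union>j\<in>J. W j)) = measure M W0 + (\<Sum>j\<in>J. measure M (W j) - measure M W0)"
proof -
  have disjoint: "disjoint_family_on (\<lambda>j. W j - W0) J"
    using assms(5) unfolding disjoint_family_on_def by blast
  have "W0 \<union> (\<Union>j\<in>J. W j) = W0 \<union> (\<Union>j\<in>J. W j - W0)"
    by blast
  also have "measure M \<dots> = measure M W0 + measure M (\<Union>j\<in>J. W j - W0)"
    using assms by (intro finite_measure_Union) (auto intro!: sets.Diff sets.finite_UN)
  also have "measure M (\<Union>j\<in>J. W j - W0) = (\<Sum>j\<in>J. measure M (W j - W0))"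
    using assms disjoint by (intro finite_measure_finite_Union) auto
  also have "\<dots> = (\<Sum>j\<in>J. measure M (W j) - measure M W0)"
    using assms by (intro sum.cong finite_measure_Diff) auto
  finally show ?thesis .
qed

lemma card_inter_le_1_iff:
  assumes "finite X"
  shows "card (X \<inter> C) \<le> 1 \<longleftrightarrow> X \<subseteq> - C \<or> (\<exists>j\<in>C. X \<subseteq> - (C - {j}))"
proof -
  have "card (X \<inter> C) \<le> 1 \<longleftrightarrow> (\<forall>a\<in>X \<inter> C. \<forall>b\<in>X \<inter> C. a = b)"
    using assms card_le_Suc0_iff_eq[of "X \<inter> C"] by simp
  also have "\<dots> \<longleftrightarrow> X \<subseteq> - C \<or> (\<exists>j\<in>C. X \<subseteq> - (C - {j}))"
    by blast
  finally show ?thesis .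
qed

lemma T2_gt_event:
  "{\<omega>. T2 n \<omega> > enat k}
     = draws_within k (- {1..n}) \<union> (\<Union>j\<in>{1..n}. draws_within k (- ({1..n} - {j})))"
  unfolding draws_within_def
  by (simp only: T2_gt_iff card_inter_le_1_iff[OF finite_set]) blast

lemma tail_formula:
  assumes nonneg: "\<forall>i\<in>{1..n}. 0 \<le> q i" and total: "(\<Sum>i=1..n. q i) \<le> 1"
  shows "T2_tail n q k = (1 - (\<Sum>i=1..n. q i)) ^ k
     + (\<Sum>j\<in>{1..n}. (1 - (\<Sum>i=1..n. q i) + q j) ^ k - (1 - (\<Sum>i=1..n. q i)) ^ k)"
proof -
  let ?S = "stream_space (measure_pmf (coupon_pmf n q))"
  let ?a = "1 - (\<Sum>i=1..n. q i)"
  let ?W_none = "draws_within k (- {1..n})" and ?W_only = "\<lambda>j. draws_within k (- ({1..n} - {j}))"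
  interpret S: prob_space ?S
    by (rule prob_space.prob_space_stream_space[OF measure_pmf.prob_space_axioms])
  have W0: "measure ?S ?W_none = ?a ^ k"
    using prob_coupon_avoid[OF nonneg total, of "{1..n}"] by (simp add: measure_draws_within)
  have W: "measure ?S (?W_only j) = (?a + q j) ^ k" if "j \<in> {1..n}" for j
  proof -
    have "measure_pmf.prob (coupon_pmf n q) (- ({1..n} - {j})) = ?a + q j"
      using prob_coupon_avoid[OF nonneg total, of "{1..n} - {j}"] that by (simp add: sum_diff1)
    then show ?thesis
      by (simp only: measure_draws_within)
  qed
  have "T2_tail n q k = measure ?S (?W_none \<union> (\<Union>j\<in>{1..n}. ?W_only j))"
    unfolding T2_tail_def T2_gt_event[symmetric] by (simp add: space_stream_space)
  also have "\<dots> = measure ?S ?W_none + (\<Sum>j\<in>{1..n}. measure ?S (?W_only j) - measure ?S ?W_none)"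
    by (intro S.measure_sunflower_Union sets_draws_within) (auto simp: draws_within_def)
  also have "\<dots> = ?a ^ k + (\<Sum>j\<in>{1..n}. (?a + q j) ^ k - ?a ^ k)"
    using W0 W by simp
  finally show ?thesis .
qed

lemma tail_formula_const:
  assumes "0 \<le> c" and "real n * c \<le> 1"
  shows "T2_tail n (\<lambda>i. c) k = (1 - real n * c) ^ k + real n * ((1 - real n * c + c) ^ k - (1 - real n * c) ^ k)"
  using tail_formula[of n "\<lambda>i. c" k] assms by simp

lemma convex_power_nonneg: "convex_on {0::real..} (\<lambda>x. x ^ k)"
proof (cases "even k")
  case True
  then show ?thesis
    using convex_on_subset[OF convex_power_even] by blast
next
  case False
  then show ?thesis
    using convex_power_odd by blast
qed

lemma power_mean_le_sum_powers:
  fixes x :: "'a \<Rightarrow> real"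
  assumes "finite I" and "I \<noteq> {}" and "\<forall>i\<in>I. 0 \<le> x i"
  shows "real (card I) * ((\<Sum>i\<in>I. x i) / real (card I)) ^ k \<le> (\<Sum>i\<in>I. x i ^ k)"
proof -
  have card: "real (card I) > 0"
    using assms by (simp add: card_gt_0_iff)
  have "((\<Sum>i\<in>I. x i) / real (card I)) ^ k = (\<Sum>i\<in>I. (1 / real (card I)) *\<^sub>R x i) ^ k"
    by (simp add: sum_divide_distrib)
  also have "\<dots> \<le> (\<Sum>i\<in>I. (1 / real (card I)) * x i ^ k)"
    using assms card by (intro convex_on_sum[OF _ _ convex_power_nonneg]) auto
  also have "\<dots> = (\<Sum>i\<in>I. x i ^ k) / real (card I)"
    by (simp add: sum_divide_distrib)
  finally show ?thesis
    using card by (simp add: field_simps)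
qed

lemma power_diff_ge:
  fixes b c :: real
  assumes "0 \<le> c" and "c \<le> b"
  shows "(b - c) * b ^ m \<le> b ^ Suc m - c ^ Suc m"
proof -
  have "b ^ Suc m - c ^ Suc m = (b - c) * b ^ m + c * (b ^ m - c ^ m)"
    by (simp add: algebra_simps)
  moreover have "0 \<le> c * (b ^ m - c ^ m)"
    using assms power_mono[OF \<open>c \<le> b\<close> \<open>0 \<le> c\<close>, of m] by simp
  ultimately show ?thesis
    by linarith
qed

(* For equal probabilities (1 - a)/n, the tail a^k + n((a + (1-a)/n)^k - a^k)
   is smallest at a = 0, where the uniform vector u is obtained. *)
lemma uniform_tail_mono:
  fixes a :: real
  assumes "0 \<le> a" and "a \<le> 1" and n: "1 \<le> real n"
  shows "0 ^ k + real n * ((1 / real n) ^ k - 0 ^ k)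
       \<le> a ^ k + real n * ((a + (1 - a) / real n) ^ k - a ^ k)"
proof (cases k)
  case 0
  then show ?thesis by simp
next
  case (Suc m)
  define b where "b = a + (1 - a) / real n"
  define c where "c = 1 / real n"
  have bc: "b - c = a * (1 - c)"
    unfolding b_def c_def using n by (simp add: field_simps)
  have "0 \<le> c" and "c \<le> 1"
    unfolding c_def using n by auto
  then have "0 \<le> b - c"
    using bc \<open>0 \<le> a\<close> by simp
  have "a \<le> b"
    unfolding b_def using assms by simp
  have "a * (1 - c) * a ^ m = (b - c) * a ^ m"
    using bc by simp
  also have "\<dots> \<le> (b - c) * b ^ m"
    using mult_left_mono[OF power_mono[OF \<open>a \<le> b\<close> \<open>0 \<le> a\<close>] \<open>0 \<le> b - c\<close>] .
  also have "\<dots> \<le> b ^ Suc m - c ^ Suc m"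
    using power_diff_ge[OF \<open>0 \<le> c\<close>, of b m] \<open>0 \<le> b - c\<close> by simp
  finally have "real n * (a * (1 - c) * a ^ m) \<le> real n * (b ^ Suc m - c ^ Suc m)"
    using n by simp
  moreover have "real n * (a * (1 - c) * a ^ m) = (real n - 1) * a ^ Suc m"
    unfolding c_def using n by (simp add: field_simps)
  ultimately have "(real n - 1) * a ^ Suc m \<le> real n * (b ^ Suc m - c ^ Suc m)"
    by simp
  moreover have "0 ^ Suc m = (0::real)"
    by simp
  ultimately show ?thesis
    unfolding Suc b_def[symmetric] c_def[symmetric] by (simp only: algebra_simps)
qed

theorem theorem5:
  fixes n :: nat and p :: "nat \<Rightarrow> real" and k :: nat
  assumes "n \<ge> 2"
    and "\<forall>i\<in>{1..n}. 0 < p i \<and> p i < 1"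
    and "(\<Sum>i=1..n. p i) \<le> 1"
  shows "T2_tail n p k \<ge> T2_tail n (\<lambda>i. (1 - (1 - (\<Sum>j=1..n. p j))) / real n) k
       \<and> T2_tail n (\<lambda>i. (1 - (1 - (\<Sum>j=1..n. p j))) / real n) k \<ge> T2_tail n (\<lambda>i. 1 / real n) k"
proof -
  define s where "s = (\<Sum>j=1..n. p j)"
  define a where "a = 1 - s"
  have n: "real n \<ge> 1" and nonneg: "\<forall>i\<in>{1..n}. 0 \<le> p i"
    using assms(1,2) by auto
  have "0 \<le> s" and "s \<le> 1"
    unfolding s_def using nonneg assms(3) by (auto intro: sum_nonneg)
  have tail_p: "T2_tail n p k = a ^ k + (\<Sum>j=1..n. (a + p j) ^ k) - real n * a ^ k"
    using tail_formula[OF nonneg assms(3), of k] by (simp add: a_def s_def sum_subtractf)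
  have tail_v: "T2_tail n (\<lambda>i. s / real n) k = a ^ k + real n * ((a + s / real n) ^ k - a ^ k)"
    using tail_formula_const[of "s / real n" n k] n \<open>0 \<le> s\<close> \<open>s \<le> 1\<close> by (simp add: a_def)
  have tail_u: "T2_tail n (\<lambda>i. 1 / real n) k = 0 ^ k + real n * ((1 / real n) ^ k - 0 ^ k)"
    using tail_formula_const[of "1 / real n" n k] n by simp
  have "(\<Sum>i=1..n. a + p i) / real n = a + s / real n"
    unfolding s_def using n by (simp add: sum.distrib field_simps)
  then have "real n * (a + s / real n) ^ k \<le> (\<Sum>i=1..n. (a + p i) ^ k)"
    using power_mean_le_sum_powers[of "{1..n}" "\<lambda>i. a + p i" k] nonneg \<open>s \<le> 1\<close> assms(1)
    by (simp add: a_def)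
  then have "T2_tail n (\<lambda>i. s / real n) k \<le> T2_tail n p k"
    unfolding tail_p tail_v by (simp add: algebra_simps)
  moreover have "T2_tail n (\<lambda>i. 1 / real n) k \<le> T2_tail n (\<lambda>i. s / real n) k"
    using uniform_tail_mono[of a n k] \<open>0 \<le> s\<close> \<open>s \<le> 1\<close> n unfolding tail_u tail_v a_def by simp
  ultimately show ?thesis
    by (simp add: s_def)
qed

end
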